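(* Let $\hat W=\begin{pmatrix}\hat 1&\hat{\mathbf c}&\hat d\\0&\hat{\mathsf A}&\hat{\mathbf b}\\0&0&\hat 1\end{pmatrix}$ be a first degree iMPO in regular form. Then there exist a row vector $\mathbf t$ and a column vector $\mathbf s$ (of length $\chi$) such that, with $$L=\begin{pmatrix}1&\mathbf t&0\\0&\mathrm{Id}&\mathbf s\\0&0&1\end{pmatrix},\qquad \hat W'=L\hat WL^{-1},$$ the identity component of $\hat W'$ has the form $$W'_0=\langle\hat 1,\hat W'\rangle=\begin{pmatrix}1&0&d_0'\\0&A_0&0\\0&0&1\end{pmatrix}$$ for some number $d_0'$, where $A_0=\langle\hat 1,\hat{\mathsf A}\rangle$. Moreover the middle block of $\hat W'$ equals $\hat{\mathsf A}$.
   Context: $\mathcal A$ is the algebra of operators on $\mathbb C^q$ with inner product $\langle\hat A,\hat B\rangle=\mathrm{Tr}[\hat A^\dagger\hat B]/\mathrm{Tr}[\hat 1]$ and an orthonormal basis $\{\hat O_\alpha\}$ with $\hat O_0=\hat 1$; for a matrix with entries in $\mathcal A$, $\langle\hat 1,\cdot\rangle$ is taken entrywise, and $(W_\alpha)_{ab}=\langle\hat O_\alpha,\hat W_{ab}\rangle$. The transfer matrix of a square such matrix is $T_W=\sum_\alpha\overline{W_\alpha}\otimes W_\alpha$. An iMPO in regular form of bond dimension $\chi$ is a $(\chi+2)\times(\chi+2)$ matrix with entries in $\mathcal A$ of the displayed block form (block sizes $1,\chi,1$); it is first degree if every eigenvalue of $T_A$ (transfer matrix of $\hat{\mathsf A}$)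 has modulus $<1$. *)

theory Defs
  imports "Jordan_Normal_Form.Char_Poly"
begin

text \<open>Operators on C^q are q x q complex matrices.  A matrix with entries in the
operator algebra is a function  nat => nat => complex mat  (entries indexed from 0).\<close>

definition op_trace :: "complex mat \<Rightarrow> complex" where
  "op_trace X = (\<Sum>i<dim_row X. X $$ (i,i))"

definition op_adj :: "complex mat \<Rightarrow> complex mat" where
  "op_adj X = mat (dim_col X) (dim_row X) (\<lambda>(i,j). cnj (X $$ (j,i)))"

definition op_inner :: "nat \<Rightarrow> complex mat \<Rightarrow> complex mat \<Rightarrow> complex" where
  "op_inner q X Y = op_trace (op_adj X * Y) / of_nat q"

definition ortho_basis :: "nat \<Rightarrow> (nat \<Rightarrow> complex mat) \<Rightarrow> bool" where
  "ortho_basis q Ob \<longleftrightarrow>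
     (\<forall>\<alpha><q^2. Ob \<alpha> \<in> carrier_mat q q) \<and>
     (\<forall>\<alpha><q^2. \<forall>\<beta><q^2. op_inner q (Ob \<alpha>) (Ob \<beta>) = (if \<alpha> = \<beta> then 1 else 0)) \<and>
     Ob 0 = 1\<^sub>m q"

definition comp_mat :: "nat \<Rightarrow> complex mat \<Rightarrow> nat \<Rightarrow> (nat \<Rightarrow> nat \<Rightarrow> complex mat) \<Rightarrow> complex mat" where
  "comp_mat q O' n W = mat n n (\<lambda>(a,b). op_inner q O' (W a b))"

definition kron :: "nat \<Rightarrow> complex mat \<Rightarrow> complex mat \<Rightarrow> complex mat" where
  "kron n X Y = mat (n*n) (n*n) (\<lambda>(i,j). X $$ (i div n, j div n) * Y $$ (i mod n, j mod n))"

definition conj_mat :: "complex mat \<Rightarrow> complex mat" where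
  "conj_mat X = mat (dim_row X) (dim_col X) (\<lambda>(i,j). cnj (X $$ (i,j)))"

definition transfer_mat :: "nat \<Rightarrow> (nat \<Rightarrow> complex mat) \<Rightarrow> nat \<Rightarrow> (nat \<Rightarrow> nat \<Rightarrow> complex mat) \<Rightarrow> complex mat" where
  "transfer_mat q Ob n W = mat (n*n) (n*n)
     (\<lambda>(i,j). \<Sum>\<alpha><q^2. kron n (conj_mat (comp_mat q (Ob \<alpha>) n W)) (comp_mat q (Ob \<alpha>) n W) $$ (i,j))"

text \<open>iMPO in regular form of bond dimension chi: (chi+2)x(chi+2) operator matrix
 [[1, c, d],[0, A, b],[0, 0, 1]]; indices 0, 1..chi, chi+1.\<close>
definition regular_form :: "nat \<Rightarrow> nat \<Rightarrow> (nat \<Rightarrow> nat \<Rightarrow> complex mat) \<Rightarrow> bool" where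
  "regular_form q \<chi> W \<longleftrightarrow>
     (\<forall>i\<le>\<chi>+1. \<forall>j\<le>\<chi>+1. W i j \<in> carrier_mat q q) \<and>
     W 0 0 = 1\<^sub>m q \<and> W (\<chi>+1) (\<chi>+1) = 1\<^sub>m q \<and>
     (\<forall>i. 1 \<le> i \<and> i \<le> \<chi>+1 \<longrightarrow> W i 0 = 0\<^sub>m q q) \<and>
     (\<forall>j\<le>\<chi>. W (\<chi>+1) j = 0\<^sub>m q q)"

definition mid_block :: "nat \<Rightarrow> (nat \<Rightarrow> nat \<Rightarrow> complex mat) \<Rightarrow> nat \<Rightarrow> nat \<Rightarrow> complex mat" where
  "mid_block \<chi> W a b = W (a+1) (b+1)"

definition first_degree :: "nat \<Rightarrow> (nat \<Rightarrow> complex mat) \<Rightarrow> nat \<Rightarrow> (nat \<Rightarrow> nat \<Rightarrow> complex mat) \<Rightarrow> bool" where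
  "first_degree q Ob \<chi> W \<longleftrightarrow>
     (\<forall>ev. eigenvalue (transfer_mat q Ob \<chi> (mid_block \<chi> W)) ev \<longrightarrow> cmod ev < 1)"

definition L_mat :: "nat \<Rightarrow> (nat \<Rightarrow> complex) \<Rightarrow> (nat \<Rightarrow> complex) \<Rightarrow> complex mat" where
  "L_mat \<chi> t s = mat (\<chi>+2) (\<chi>+2) (\<lambda>(i,j).
      if i = j then 1
      else if i = 0 \<and> 1 \<le> j \<and> j \<le> \<chi> then t (j - 1)
      else if 1 \<le> i \<and> i \<le> \<chi> \<and> j = \<chi>+1 then s (i - 1)
      else 0)"

definition sandwich :: "nat \<Rightarrow> nat \<Rightarrow> complex mat \<Rightarrow> (nat \<Rightarrow> nat \<Rightarrow> complex mat) \<Rightarrow> complex mat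
    \<Rightarrow> nat \<Rightarrow> nat \<Rightarrow> complex mat" where
  "sandwich q n L W M i j =
     mat q q (\<lambda>(x,y). \<Sum>k<n. \<Sum>l<n. L $$ (i,k) * (W k l) $$ (x,y) * M $$ (l,j))"

end

theory Submission
  imports Defs "Jordan_Normal_Form.Spectral_Radius"
begin

text \<open>
  Conjugation by L does not change the block A and turns the identity components of the corner
  blocks into c0 - t (1 - A0) and b0 + (1 - A0) s, so suitable t and s exist as soon as 1 is
  not an eigenvalue of A0.  Suppose A0 v = v with v \<noteq> 0, let T be the transfer matrix of A and
  u = conj v \<otimes> v.  Reading vectors of length \<chi>^2 as \<chi> x \<chi> matrices F, the forms
  y^T F (conj y) pull back along T to sums over \<alpha> of the same forms at the vectors A\<alpha>^* y;
  they are nonnegative at u, and the term \<alpha> = 0 reproduces the form of u itself.  Hence the form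
  of T^k u at v never drops below that of u, which is |v|^4 > 0.  But first degree means that T
  has spectral radius below 1, so T^k tends to 0.
\<close>

lemma sum_lessThan_mult_nat:
  fixes g :: "nat \<Rightarrow> 'a::comm_monoid_add"
  shows "(\<Sum>i<m*n. g i) = (\<Sum>c<m. \<Sum>d<n. g (c*n + d))"
proof -
  have "(\<Sum>i<m*n. g i) = (\<Sum>c<m. sum g {c*n..<c*n + n})"
    using sum.nat_group[of g n m] by simp
  also have "\<dots> = (\<Sum>c<m. \<Sum>d<n. g (c*n + d))"
    by (simp add: sum.shift_bounds_nat_ivl[of g 0 _ n, simplified] atLeast0LessThan add.commute)
  finally show ?thesis .
qed

lemma linear_index_less:
  assumes "a < m" "b < (n::nat)"
  shows "a*n + b < m*n"
proof -
  have "a*n + b < (a + 1)*n" using assms by simp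
  also have "\<dots> \<le> m*n" using assms by (intro mult_le_mono1) simp
  finally show ?thesis .
qed

lemma sum_swap_pairs:
  "(\<Sum>a\<in>A. \<Sum>b\<in>B. \<Sum>c\<in>C. \<Sum>d\<in>D. g a b c d) = (\<Sum>c\<in>C. \<Sum>d\<in>D. \<Sum>a\<in>A. \<Sum>b\<in>B. g a b c d)"
proof -
  have "(\<Sum>a\<in>A. \<Sum>b\<in>B. \<Sum>c\<in>C. \<Sum>d\<in>D. g a b c d) = (\<Sum>a\<in>A. \<Sum>c\<in>C. \<Sum>b\<in>B. \<Sum>d\<in>D. g a b c d)"
    by (rule sum.cong[OF refl], rule sum.swap)
  also have "\<dots> = (\<Sum>c\<in>C. \<Sum>a\<in>A. \<Sum>b\<in>B. \<Sum>d\<in>D. g a b c d)"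
    by (rule sum.swap)
  also have "\<dots> = (\<Sum>c\<in>C. \<Sum>a\<in>A. \<Sum>d\<in>D. \<Sum>b\<in>B. g a b c d)"
    by (rule sum.cong[OF refl], rule sum.cong[OF refl], rule sum.swap)
  also have "\<dots> = (\<Sum>c\<in>C. \<Sum>d\<in>D. \<Sum>a\<in>A. \<Sum>b\<in>B. g a b c d)"
    by (rule sum.cong[OF refl], rule sum.swap)
  finally show ?thesis .
qed

lemma sum_lessThan_add_2:
  fixes f :: "nat \<Rightarrow> 'a::comm_monoid_add"
  shows "(\<Sum>k<n+2. f k) = f 0 + (\<Sum>k<n. f (k+1)) + f (n+1)"
  using sum.lessThan_Suc_shift[of f "Suc n"] sum.lessThan_Suc_shift[of f n] by simp

lemma sum_shift_delta:
  fixes f :: "nat \<Rightarrow> 'a::comm_monoid_add"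
  assumes "1 \<le> i" "i \<le> n"
  shows "(\<Sum>k<n. if k+1 = i then f k else 0) = f (i-1)"
proof -
  have "(\<Sum>k<n. if k+1 = i then f k else 0) = (\<Sum>k<n. if k = i-1 then f k else 0)"
    using assms by (intro sum.cong) auto
  also have "\<dots> = f (i-1)" using assms by auto
  finally show ?thesis .
qed

section \<open>Powers and spectral radius of complex matrices\<close>

lemma index_mult_mult_mat:
  assumes "L \<in> carrier_mat n n" "X \<in> carrier_mat n n" "M \<in> carrier_mat n n" "i < n" "j < n"
  shows "(L * X * M) $$ (i,j) = (\<Sum>k<n. \<Sum>l<n. L $$ (i,k) * X $$ (k,l) * M $$ (l,j))"
  using assms
  by (simp add: scalar_prod_def atLeast0LessThan sum_distrib_left sum_distrib_right mult_ac)

lemma pow_mat_Suc_left: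
  assumes "A \<in> carrier_mat n n"
  shows "A ^\<^sub>m Suc k = A * A ^\<^sub>m k"
proof (induction k)
  case 0
  then show ?case using assms by simp
next
  case (Suc k)
  have "A ^\<^sub>m Suc (Suc k) = (A * A ^\<^sub>m k) * A" using Suc by simp
  also have "\<dots> = A * A ^\<^sub>m Suc k" using assms by (simp add: assoc_mult_mat[of _ n n _ n _ n])
  finally show ?case .
qed

lemma pow_mat_smult:
  fixes c :: "'a :: comm_semiring_1"
  assumes "A \<in> carrier_mat n n"
  shows "(c \<cdot>\<^sub>m A) ^\<^sub>m k = c ^ k \<cdot>\<^sub>m A ^\<^sub>m k"
proof (induction k)
  case 0
  then show ?case using assms by (auto intro!: eq_matI)
next
  case (Suc k)
  then show ?case
    using assms by (auto intro!: eq_matI sum.cong simp: scalar_prod_def sum_distrib_left mult_ac)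
qed

lemma eigenvalue_smult_mat:
  fixes A :: "complex mat"
  assumes A: "A \<in> carrier_mat n n" and c: "c \<noteq> 0" and ev: "eigenvalue (c \<cdot>\<^sub>m A) e"
  shows "eigenvalue A (e / c)"
proof -
  from ev obtain v where v: "v \<in> carrier_vec n" "v \<noteq> 0\<^sub>v n" "(c \<cdot>\<^sub>m A) *\<^sub>v v = e \<cdot>\<^sub>v v"
    using A unfolding eigenvalue_def eigenvector_def by auto
  have "A *\<^sub>v v = (e / c) \<cdot>\<^sub>v v"
  proof (rule eq_vecI)
    fix i assume i: "i < dim_vec ((e / c) \<cdot>\<^sub>v v)"
    have "c * (A *\<^sub>v v) $ i = e * v $ i"
      using arg_cong[OF v(3), of "\<lambda>w. w $ i"] i v(1) A
      by (simp add: scalar_prod_def sum_distrib_left ac_simps)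
    then show "(A *\<^sub>v v) $ i = ((e / c) \<cdot>\<^sub>v v) $ i"
      using i c by (simp add: field_simps)
  qed (use A v in simp)
  then show ?thesis using v A unfolding eigenvalue_def eigenvector_def by auto
qed

lemma spectral_radius_smult_le:
  assumes A: "A \<in> carrier_mat n n" and n: "0 < n" and c: "c \<noteq> 0"
  shows "spectral_radius (c \<cdot>\<^sub>m A) \<le> cmod c * spectral_radius A"
proof -
  have cA: "c \<cdot>\<^sub>m A \<in> carrier_mat n n" using A by simp
  obtain e where e: "eigenvalue (c \<cdot>\<^sub>m A) e" "spectral_radius (c \<cdot>\<^sub>m A) = cmod e"
    using spectral_radius_mem_max(1)[OF cA n] unfolding spectrum_def by auto
  have "cmod (e / c) \<le> spectral_radius A"
    using eigenvalue_smult_mat[OF A c e(1)]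
    by (intro spectral_radius_mem_max(2)[OF A n]) (auto simp: spectrum_def)
  then show ?thesis using e(2) c by (simp add: norm_divide field_simps)
qed

lemma pow_mat_tendsto_zero:
  fixes A :: "complex mat"
  assumes A: "A \<in> carrier_mat n n" and sr: "spectral_radius A < 1" and ij: "i < n" "j < n"
  shows "(\<lambda>k. (A ^\<^sub>m k) $$ (i,j)) \<longlonglongrightarrow> 0"
proof -
  have n: "0 < n" using ij by simp
  \<comment> \<open>r A still has spectral radius below 1, so its powers are bounded and those of A decay like r^-k.\<close>
  define r where "r = 2 / (1 + spectral_radius A)"
  have sr0: "0 \<le> spectral_radius A"
    using spectral_radius_mem_max(1)[OF A n] by auto
  have r1: "1 < r" and r_sr: "r * spectral_radius A < 1"
    unfolding r_def using sr sr0 by (simp_all add: field_simps)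
  define S where "S = complex_of_real r \<cdot>\<^sub>m A"
  have S: "S \<in> carrier_mat n n" unfolding S_def using A by simp
  have "spectral_radius S < 1"
    using spectral_radius_smult_le[OF A n, of "complex_of_real r"] r1 r_sr
    unfolding S_def by simp
  then obtain c where c: "\<And>k. norm_bound (S ^\<^sub>m k) c"
    using spectral_radius_jnf_norm_bound_less_1_upper_triangular[OF S] by auto
  have bound: "cmod ((A ^\<^sub>m k) $$ (i,j)) \<le> c * (inverse r) ^ k" for k
  proof -
    have "r ^ k * cmod ((A ^\<^sub>m k) $$ (i,j)) = cmod ((S ^\<^sub>m k) $$ (i,j))"
      using ij A r1 by (simp add: S_def pow_mat_smult norm_mult norm_power)
    also have "\<dots> \<le> c" using c[of k] ij S unfolding norm_bound_def by auto
    finally show ?thesis using r1 by (simp add: field_simps power_inverse)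
  qed
  have "(\<lambda>k. c * (inverse r) ^ k) \<longlonglongrightarrow> 0"
    using r1 by (intro tendsto_mult_right_zero LIMSEQ_power_zero) (simp add: inverse_less_1_iff)
  then show ?thesis
    by (rule tendsto_0_le[where K = 1]) (auto intro!: always_eventually order.trans[OF bound abs_ge_self])
qed

lemma eigenvalue_transpose_mat:
  assumes "A \<in> carrier_mat n n"
  shows "eigenvalue (transpose_mat A) e \<longleftrightarrow> eigenvalue A (e :: 'a::field)"
  using assms by (simp add: eigenvalue_root_char_poly[of _ n])

lemma solvable_if_not_eigenvalue_one:
  fixes A :: "'a::field mat"
  assumes A: "A \<in> carrier_mat n n" and ev: "\<not> eigenvalue A 1"
  shows "\<exists>x. \<forall>a<n. x a - (\<Sum>b<n. A $$ (a,b) * x b) = c a"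
proof -
  let ?M = "char_matrix A 1"
  have M: "?M \<in> carrier_mat n n" using A by simp
  have "det ?M \<noteq> 0" using ev eigenvalue_det[OF A] by simp
  from det_non_zero_imp_unit[OF M this, of undefined]
  obtain B where B: "B \<in> carrier_mat n n" and MB: "?M * B = 1\<^sub>m n"
    unfolding Units_def ring_mat_def by auto
  define x where "x = B *\<^sub>v vec n (\<lambda>a. - c a)"
  have xc: "x \<in> carrier_vec n" unfolding x_def using B by simp
  have "?M *\<^sub>v x = vec n (\<lambda>a. - c a)"
    unfolding x_def using B M MB by (simp add: assoc_mult_mat_vec[symmetric, of _ n n _ n])
  moreover have "(?M *\<^sub>v x) $ a = (\<Sum>b<n. A $$ (a,b) * x $ b) - x $ a" if "a < n" for a
    using that A xc
    by (simp add: char_matrix_def scalar_prod_def atLeast0LessThan ring_distribs sum_subtractf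
        if_distrib[of "\<lambda>u. u * _"] sum.delta' cong: if_cong)
  ultimately have "(\<Sum>b<n. A $$ (a,b) * x $ b) - x $ a = - c a" if "a < n" for a
    using that by (metis index_vec)
  then show ?thesis by (intro exI[of _ "\<lambda>b. x $ b"]) (simp add: algebra_simps)
qed

section \<open>The transfer matrix\<close>

definition transfer :: "nat \<Rightarrow> nat \<Rightarrow> (nat \<Rightarrow> complex mat) \<Rightarrow> complex mat" where
  "transfer m n A = mat (n*n) (n*n) (\<lambda>(i,j).
     \<Sum>\<alpha><m. cnj (A \<alpha> $$ (i div n, j div n)) * A \<alpha> $$ (i mod n, j mod n))"

text \<open>The vector f is read as the n x n matrix F with F(a,b) = f $ (a*n + b).\<close>

definition pair_form :: "nat \<Rightarrow> (nat \<Rightarrow> complex) \<Rightarrow> complex vec \<Rightarrow> complex" where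
  "pair_form n y f = (\<Sum>a<n. \<Sum>b<n. y a * cnj (y b) * f $ (a*n + b))"

definition adj_apply :: "nat \<Rightarrow> complex mat \<Rightarrow> (nat \<Rightarrow> complex) \<Rightarrow> nat \<Rightarrow> complex" where
  "adj_apply n B y c = (\<Sum>a<n. cnj (B $$ (a,c)) * y a)"

definition cnj_kron_vec :: "nat \<Rightarrow> complex vec \<Rightarrow> complex vec" where
  "cnj_kron_vec n v = vec (n*n) (\<lambda>i. cnj (v $ (i div n)) * v $ (i mod n))"

lemma transfer_carrier [simp]: "transfer m n A \<in> carrier_mat (n*n) (n*n)"
  and dim_transfer [simp]: "dim_row (transfer m n A) = n*n" "dim_col (transfer m n A) = n*n"
  unfolding transfer_def by simp_all

lemma cnj_kron_vec_carrier [simp]: "cnj_kron_vec n v \<in> carrier_vec (n*n)"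
  unfolding cnj_kron_vec_def by simp

lemma transfer_mult_vec_index:
  assumes f: "f \<in> carrier_vec (n*n)" and a: "a < n" and b: "b < n"
  shows "(transfer m n A *\<^sub>v f) $ (a*n + b) =
    (\<Sum>\<alpha><m. \<Sum>c<n. \<Sum>d<n. cnj (A \<alpha> $$ (a,c)) * A \<alpha> $$ (b,d) * f $ (c*n + d))"
proof -
  have "(transfer m n A *\<^sub>v f) $ (a*n + b) = (\<Sum>j<n*n. transfer m n A $$ (a*n + b, j) * f $ j)"
    using f linear_index_less[OF a b] by (simp add: scalar_prod_def atLeast0LessThan)
  also have "\<dots> = (\<Sum>c<n. \<Sum>d<n. \<Sum>\<alpha><m. cnj (A \<alpha> $$ (a,c)) * A \<alpha> $$ (b,d) * f $ (c*n + d))"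
    unfolding sum_lessThan_mult_nat
    using a b by (intro sum.cong refl) (auto simp: transfer_def sum_distrib_right linear_index_less)
  also have "\<dots> = (\<Sum>\<alpha><m. \<Sum>c<n. \<Sum>d<n. cnj (A \<alpha> $$ (a,c)) * A \<alpha> $$ (b,d) * f $ (c*n + d))"
    by (simp only: sum.swap[of _ "{..<m}"])
  finally show ?thesis .
qed

lemma pair_form_adj_apply:
  "(\<Sum>a<n. \<Sum>b<n. y a * cnj (y b) * (\<Sum>c<n. \<Sum>d<n. cnj (B $$ (a,c)) * B $$ (b,d) * f $ (c*n + d)))
    = pair_form n (adj_apply n B y) f"
proof -
  have "(\<Sum>a<n. \<Sum>b<n. y a * cnj (y b) * (\<Sum>c<n. \<Sum>d<n. cnj (B $$ (a,c)) * B $$ (b,d) * f $ (c*n + d)))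
      = (\<Sum>a<n. \<Sum>b<n. \<Sum>c<n. \<Sum>d<n. cnj (B $$ (a,c)) * y a * (B $$ (b,d) * cnj (y b)) * f $ (c*n + d))"
    by (simp add: sum_distrib_left mult_ac)
  also have "\<dots> = (\<Sum>c<n. \<Sum>d<n. \<Sum>a<n. \<Sum>b<n.
      cnj (B $$ (a,c)) * y a * (B $$ (b,d) * cnj (y b)) * f $ (c*n + d))"
    by (rule sum_swap_pairs)
  also have "\<dots> = pair_form n (adj_apply n B y) f"
    unfolding pair_form_def adj_apply_def cnj_sum sum_product
    by (simp only: sum_distrib_right complex_cnj_mult complex_cnj_cnj)
  finally show ?thesis .
qed

lemma pair_form_transfer:
  assumes f: "f \<in> carrier_vec (n*n)"
  shows "pair_form n y (transfer m n A *\<^sub>v f) = (\<Sum>\<alpha><m. pair_form n (adj_apply n (A \<alpha>) y) f)"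
proof -
  have "pair_form n y (transfer m n A *\<^sub>v f) = (\<Sum>a<n. \<Sum>b<n. \<Sum>\<alpha><m.
      y a * cnj (y b) * (\<Sum>c<n. \<Sum>d<n. cnj (A \<alpha> $$ (a,c)) * A \<alpha> $$ (b,d) * f $ (c*n + d)))"
    unfolding pair_form_def
    by (intro sum.cong refl) (simp add: transfer_mult_vec_index[OF f] sum_distrib_left)
  also have "\<dots> = (\<Sum>\<alpha><m. \<Sum>a<n. \<Sum>b<n.
      y a * cnj (y b) * (\<Sum>c<n. \<Sum>d<n. cnj (A \<alpha> $$ (a,c)) * A \<alpha> $$ (b,d) * f $ (c*n + d)))"
    by (simp only: sum.swap[of _ _ "{..<m}"])
  also have "\<dots> = (\<Sum>\<alpha><m. pair_form n (adj_apply n (A \<alpha>) y) f)"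
    by (simp only: pair_form_adj_apply)
  finally show ?thesis .
qed

lemma pair_form_cnj_kron_vec:
  "pair_form n y (cnj_kron_vec n v) = cnj (\<Sum>b<n. cnj (y b) * v $ b) * (\<Sum>b<n. cnj (y b) * v $ b)"
proof -
  have "pair_form n y (cnj_kron_vec n v) = (\<Sum>a<n. \<Sum>b<n. (y a * cnj (v $ a)) * (cnj (y b) * v $ b))"
    unfolding pair_form_def cnj_kron_vec_def
    by (intro sum.cong refl) (simp add: linear_index_less mult_ac)
  then show ?thesis by (simp add: cnj_sum sum_product)
qed

lemma cnj_mult_self_nonneg: "0 \<le> cnj z * (z :: complex)"
  using conjugate_square_positive[of z] by (simp add: mult.commute)

lemma cnj_mult_self_pos: "z \<noteq> 0 \<Longrightarrow> 0 < cnj z * (z :: complex)"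
  using conjugate_square_greater_0[of z] by (simp add: mult.commute)

lemma pair_form_cnj_kron_vec_nonneg: "0 \<le> pair_form n y (cnj_kron_vec n v)"
  unfolding pair_form_cnj_kron_vec by (rule cnj_mult_self_nonneg)

lemma pair_form_adj_apply_fixed:
  assumes B: "B \<in> carrier_mat n n" and v: "v \<in> carrier_vec n" and fixed: "B *\<^sub>v v = v"
  shows "pair_form n (adj_apply n B y) (cnj_kron_vec n v) = pair_form n y (cnj_kron_vec n v)"
proof -
  have "(\<Sum>c<n. cnj (adj_apply n B y c) * v $ c) = (\<Sum>a<n. cnj (y a) * (B *\<^sub>v v) $ a)"
    unfolding adj_apply_def using B v
    by (simp add: cnj_sum sum_distrib_left sum_distrib_right scalar_prod_def atLeast0LessThan mult_ac)
       (rule sum.swap)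
  then show ?thesis unfolding pair_form_cnj_kron_vec fixed by simp
qed

lemma pair_form_transfer_pow_ge:
  assumes m: "0 < m" and A0: "A 0 \<in> carrier_mat n n" and v: "v \<in> carrier_vec n"
    and fixed: "A 0 *\<^sub>v v = v"
  shows "pair_form n y (cnj_kron_vec n v) \<le> pair_form n y (transfer m n A ^\<^sub>m k *\<^sub>v cnj_kron_vec n v)"
proof (induction k arbitrary: y)
  case 0
  show ?case by simp
next
  case (Suc k)
  let ?T = "transfer m n A" and ?u = "cnj_kron_vec n v"
  have "pair_form n y ?u = pair_form n (adj_apply n (A 0) y) ?u"
    using pair_form_adj_apply_fixed[OF A0 v fixed] by simp
  also have "\<dots> \<le> (\<Sum>\<alpha><m. pair_form n (adj_apply n (A \<alpha>) y) ?u)"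
    using m by (intro member_le_sum pair_form_cnj_kron_vec_nonneg) auto
  also have "\<dots> \<le> (\<Sum>\<alpha><m. pair_form n (adj_apply n (A \<alpha>) y) (?T ^\<^sub>m k *\<^sub>v ?u))"
    by (intro sum_mono Suc.IH)
  also have "\<dots> = pair_form n y (?T *\<^sub>v (?T ^\<^sub>m k *\<^sub>v ?u))"
    by (intro pair_form_transfer[symmetric] mult_mat_vec_carrier[of _ "n*n" "n*n"]) auto
  also have "?T *\<^sub>v (?T ^\<^sub>m k *\<^sub>v ?u) = ?T ^\<^sub>m Suc k *\<^sub>v ?u"
    by (simp add: pow_mat_Suc_left[of _ "n*n"] assoc_mult_mat_vec[of _ "n*n" "n*n" _ "n*n"]
      del: pow_mat.simps(2))
  finally show ?case .
qed

lemma spectral_radius_transfer_ge_1: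
  assumes m: "0 < m" and A0: "A 0 \<in> carrier_mat n n" and ev: "eigenvalue (A 0) 1"
  shows "1 \<le> spectral_radius (transfer m n A)"
proof (rule ccontr)
  assume "\<not> ?thesis"
  then have sr: "spectral_radius (transfer m n A) < 1" by simp
  from ev obtain v where v: "v \<in> carrier_vec n" "v \<noteq> 0\<^sub>v n" and fixed: "A 0 *\<^sub>v v = v"
    using A0 unfolding eigenvalue_def eigenvector_def by auto
  define u where "u = cnj_kron_vec n v"
  define f where "f k = pair_form n (\<lambda>a. v $ a) (transfer m n A ^\<^sub>m k *\<^sub>v u)" for k
  obtain a0 where a0: "a0 < n" "v $ a0 \<noteq> 0"
    using v by (metis eq_vecI carrier_vecD index_zero_vec)
  have u: "u \<in> carrier_vec (n*n)" unfolding u_def by simp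
  define P where "P = (\<Sum>b<n. cnj (v $ b) * v $ b)"
  have "0 < P"
    unfolding P_def using a0 by (intro sum_pos2[of _ a0] cnj_mult_self_pos cnj_mult_self_nonneg) auto
  moreover have "f 0 = cnj P * P"
    unfolding f_def u_def P_def pair_form_cnj_kron_vec[symmetric] using u u_def by simp
  ultimately have "0 < f 0" using cnj_mult_self_pos[of P] by auto
  moreover have "f 0 \<le> f k" for k
    unfolding f_def u_def
    using pair_form_transfer_pow_ge[of m A n v, OF m A0 v(1) fixed] u u_def by simp
  moreover have "f \<longlonglongrightarrow> 0"
  proof -
    have entry_lim: "(\<lambda>k. (transfer m n A ^\<^sub>m k *\<^sub>v u) $ i) \<longlonglongrightarrow> 0" if "i < n*n" for i
    proof -
      have "(\<lambda>k. (\<Sum>j<n*n. (transfer m n A ^\<^sub>m k) $$ (i,j) * u $ j)) \<longlonglongrightarrow> 0"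
        using that by (intro tendsto_null_sum tendsto_mult_left_zero
            pow_mat_tendsto_zero[OF transfer_carrier sr]) auto
      then show ?thesis
        using that u by (simp add: scalar_prod_def atLeast0LessThan)
    qed
    show ?thesis
      unfolding f_def pair_form_def
      by (intro tendsto_null_sum tendsto_mult_right_zero entry_lim linear_index_less) auto
  qed
  ultimately have "0 < Re (f 0)" "\<And>k. Re (f 0) \<le> Re (f k)" "(\<lambda>k. Re (f k)) \<longlonglongrightarrow> 0"
    using tendsto_Re by (fastforce simp: less_eq_complex_def less_complex_def)+
  then show False
    using LIMSEQ_le_const[of "\<lambda>k. Re (f k)" 0 "Re (f 0)"] by auto
qed

section \<open>Operator-valued matrices\<close>

lemma transfer_mat_eq_transfer:
  "transfer_mat q Ob n W = transfer (q^2) n (\<lambda>\<alpha>. comp_mat q (Ob \<alpha>) n W)"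
proof (rule eq_matI)
  fix i j assume "i < dim_row (transfer (q^2) n (\<lambda>\<alpha>. comp_mat q (Ob \<alpha>) n W))"
    and "j < dim_col (transfer (q^2) n (\<lambda>\<alpha>. comp_mat q (Ob \<alpha>) n W))"
  then have ij: "i < n*n" "j < n*n" by auto
  then have "0 < n" by (cases n) auto
  with ij have "i div n < n" "j div n < n" "i mod n < n" "j mod n < n"
    by (auto simp: less_mult_imp_div_less)
  with ij show "transfer_mat q Ob n W $$ (i,j) = transfer (q^2) n (\<lambda>\<alpha>. comp_mat q (Ob \<alpha>) n W) $$ (i,j)"
    by (simp add: transfer_mat_def transfer_def kron_def conj_mat_def comp_mat_def)
qed (auto simp: transfer_mat_def)

lemma op_inner_eq_sum:
  assumes "X \<in> carrier_mat q q" "Y \<in> carrier_mat q q"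
  shows "op_inner q X Y = (\<Sum>x<q. \<Sum>z<q. cnj (X $$ (z,x)) * Y $$ (z,x)) / of_nat q"
  using assms by (simp add: op_inner_def op_trace_def op_adj_def scalar_prod_def atLeast0LessThan)

lemma op_inner_one:
  assumes "Y \<in> carrier_mat q q"
  shows "op_inner q (1\<^sub>m q) Y = (\<Sum>x<q. Y $$ (x,x)) / of_nat q"
proof -
  have "op_adj (1\<^sub>m q) = (1\<^sub>m q :: complex mat)"
    by (rule eq_matI) (auto simp: op_adj_def)
  then show ?thesis using assms unfolding op_inner_def op_trace_def by simp
qed

lemma comp_mat_carrier [simp]: "comp_mat q O' n W \<in> carrier_mat n n"
  and dim_comp_mat [simp]: "dim_row (comp_mat q O' n W) = n" "dim_col (comp_mat q O' n W) = n"
  and index_comp_mat [simp]: "k < n \<Longrightarrow> l < n \<Longrightarrow> comp_mat q O' n W $$ (k,l) = op_inner q O' (W k l)"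
  by (simp_all add: comp_mat_def)

definition entry_mat :: "nat \<Rightarrow> (nat \<Rightarrow> nat \<Rightarrow> complex mat) \<Rightarrow> nat \<Rightarrow> nat \<Rightarrow> complex mat" where
  "entry_mat n W x y = mat n n (\<lambda>(k,l). W k l $$ (x,y))"

lemma index_sandwich:
  assumes "L \<in> carrier_mat n n" "M \<in> carrier_mat n n" "i < n" "j < n" "x < q" "y < q"
  shows "sandwich q n L W M i j $$ (x,y) = (L * entry_mat n W x y * M) $$ (i,j)"
  using assms
  by (subst index_mult_mult_mat[of _ n]) (auto simp: sandwich_def entry_mat_def mult_ac)

lemma comp_mat_sandwich:
  assumes O: "O' \<in> carrier_mat q q" and L: "L \<in> carrier_mat n n" and M: "M \<in> carrier_mat n n"
    and W: "\<And>k l. k < n \<Longrightarrow> l < n \<Longrightarrow> W k l \<in> carrier_mat q q"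
  shows "comp_mat q O' n (sandwich q n L W M) = L * comp_mat q O' n W * M"
proof (rule eq_matI)
  fix i j assume "i < dim_row (L * comp_mat q O' n W * M)" "j < dim_col (L * comp_mat q O' n W * M)"
  then have i: "i < n" and j: "j < n" using L M by auto
  have "comp_mat q O' n (sandwich q n L W M) $$ (i,j)
      = (\<Sum>x<q. \<Sum>z<q. cnj (O' $$ (z,x)) *
          (\<Sum>k<n. \<Sum>l<n. L $$ (i,k) * W k l $$ (z,x) * M $$ (l,j))) / of_nat q"
    using i j O by (simp add: op_inner_eq_sum[of _ q] sandwich_def)
  also have "\<dots> = (\<Sum>x<q. \<Sum>z<q. \<Sum>k<n. \<Sum>l<n.
          cnj (O' $$ (z,x)) * (L $$ (i,k) * W k l $$ (z,x) * M $$ (l,j))) / of_nat q"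
    by (simp only: sum_distrib_left)
  also have "\<dots> = (\<Sum>k<n. \<Sum>l<n. \<Sum>x<q. \<Sum>z<q.
          cnj (O' $$ (z,x)) * (L $$ (i,k) * W k l $$ (z,x) * M $$ (l,j))) / of_nat q"
    by (subst sum_swap_pairs) (rule refl)
  also have "\<dots> = (\<Sum>k<n. \<Sum>l<n. L $$ (i,k) * op_inner q O' (W k l) * M $$ (l,j))"
    using O W by (simp add: op_inner_eq_sum[of _ q] sum_divide_distrib sum_distrib_left sum_distrib_right mult_ac)
  also have "\<dots> = (L * comp_mat q O' n W * M) $$ (i,j)"
    using i j by (subst index_mult_mult_mat[OF L comp_mat_carrier M i j]) simp
  finally show "comp_mat q O' n (sandwich q n L W M) $$ (i,j) = (L * comp_mat q O' n W * M) $$ (i,j)" .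
qed (use L M in auto)

lemma first_degree_not_eigenvalue_one:
  assumes q: "0 < q" and fd: "first_degree q Ob \<chi> W"
  shows "\<not> eigenvalue (comp_mat q (Ob 0) \<chi> (mid_block \<chi> W)) 1"
proof
  assume ev: "eigenvalue (comp_mat q (Ob 0) \<chi> (mid_block \<chi> W)) 1"
  let ?T = "transfer_mat q Ob \<chi> (mid_block \<chi> W)"
  have "1 \<le> spectral_radius ?T"
    unfolding transfer_mat_eq_transfer using q ev by (intro spectral_radius_transfer_ge_1) auto
  moreover have "0 < \<chi>" using eigenvalue_imp_nonzero_dim[OF comp_mat_carrier ev] .
  ultimately obtain e where "eigenvalue ?T e" "1 \<le> cmod e"
    using spectral_radius_mem_max(1)[of ?T "\<chi>*\<chi>"]
    by (auto simp: transfer_mat_eq_transfer spectrum_def)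
  then show False using fd unfolding first_degree_def by force
qed

section \<open>Conjugation by L\<close>

definition L_inv_mat :: "nat \<Rightarrow> (nat \<Rightarrow> complex) \<Rightarrow> (nat \<Rightarrow> complex) \<Rightarrow> complex mat" where
  "L_inv_mat n t s = mat (n+2) (n+2) (\<lambda>(i,j).
      if i = j then 1
      else if i = 0 \<and> 1 \<le> j \<and> j \<le> n then - t (j - 1)
      else if 1 \<le> i \<and> i \<le> n \<and> j = n+1 then - s (i - 1)
      else if i = 0 \<and> j = n+1 then (\<Sum>k<n. t k * s k)
      else 0)"

lemma L_mat_carrier [simp]: "L_mat n t s \<in> carrier_mat (n+2) (n+2)"
  and L_inv_mat_carrier [simp]: "L_inv_mat n t s \<in> carrier_mat (n+2) (n+2)"
  and dim_L_mat [simp]: "dim_row (L_mat n t s) = n+2" "dim_col (L_mat n t s) = n+2"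
  and dim_L_inv_mat [simp]: "dim_row (L_inv_mat n t s) = n+2" "dim_col (L_inv_mat n t s) = n+2"
  by (simp_all add: L_mat_def L_inv_mat_def)

lemma L_mat_row_sum:
  assumes "i < n+2"
  shows "(\<Sum>k<n+2. L_mat n t s $$ (i,k) * f k) =
    (if i = 0 then f 0 + (\<Sum>k<n. t k * f (k+1))
     else if i \<le> n then f i + s (i-1) * f (n+1)
     else f (n+1))"
proof -
  consider "i = 0" | "1 \<le> i" "i \<le> n" | "i = n+1" using assms by linarith
  then show ?thesis
  proof cases
    case 2
    have "(\<Sum>k<n. L_mat n t s $$ (i,k+1) * f (k+1)) = (\<Sum>k<n. if k+1 = i then f (k+1) else 0)"
      using 2 by (intro sum.cong) (auto simp: L_mat_def)
    also have "\<dots> = f i" using sum_shift_delta[of i n "\<lambda>k. f (k+1)"] 2 by simp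
    finally show ?thesis using 2 unfolding sum_lessThan_add_2 by (simp add: L_mat_def)
  qed (unfold sum_lessThan_add_2, auto simp: L_mat_def)
qed

lemma L_inv_mat_col_sum:
  assumes "j < n+2"
  shows "(\<Sum>l<n+2. g l * L_inv_mat n t s $$ (l,j)) =
    (if j = 0 then g 0
     else if j \<le> n then g j - t (j-1) * g 0
     else g (n+1) - (\<Sum>l<n. s l * g (l+1)) + (\<Sum>k<n. t k * s k) * g 0)"
proof -
  consider "j = 0" | "1 \<le> j" "j \<le> n" | "j = n+1" using assms by linarith
  then show ?thesis
  proof cases
    case 2
    have "(\<Sum>l<n. g (l+1) * L_inv_mat n t s $$ (l+1,j)) = (\<Sum>l<n. if l+1 = j then g (l+1) else 0)"
      using 2 by (intro sum.cong) (auto simp: L_inv_mat_def)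
    also have "\<dots> = g j" using sum_shift_delta[of j n "\<lambda>l. g (l+1)"] 2 by simp
    finally show ?thesis using 2 unfolding sum_lessThan_add_2 by (simp add: L_inv_mat_def)
  next
    case 3
    have "(\<Sum>l<n. g (l+1) * L_inv_mat n t s $$ (l+1,j)) = - (\<Sum>l<n. s l * g (l+1))"
      using 3 by (simp add: L_inv_mat_def sum_negf[symmetric] mult.commute)
    then show ?thesis using 3 unfolding sum_lessThan_add_2 by (simp add: L_inv_mat_def)
  qed (unfold sum_lessThan_add_2, auto simp: L_inv_mat_def)
qed

lemma L_mat_mult_L_inv_mat: "L_mat n t s * L_inv_mat n t s = 1\<^sub>m (n+2)"
proof (rule eq_matI)
  fix i j assume "i < dim_row (1\<^sub>m (n+2) :: complex mat)" "j < dim_col (1\<^sub>m (n+2) :: complex mat)"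
  then have i: "i < n+2" and j: "j < n+2" by auto
  have row_L: "(\<Sum>l<n. s l * L_mat n t s $$ (i,l+1)) =
      (if i = 0 then (\<Sum>l<n. t l * s l) else if i \<le> n then s (i-1) else 0)"
  proof -
    consider "i = 0" | "1 \<le> i" "i \<le> n" | "i = n+1" using i by linarith
    then show ?thesis
    proof cases
      case 2
      have "(\<Sum>l<n. s l * L_mat n t s $$ (i,l+1)) = (\<Sum>l<n. if l+1 = i then s l else 0)"
        using 2 by (intro sum.cong) (auto simp: L_mat_def)
      then show ?thesis using sum_shift_delta[of i n s] 2 by simp
    qed (auto simp: L_mat_def mult.commute intro: sum.cong)
  qed
  have "(L_mat n t s * L_inv_mat n t s) $$ (i,j) = (\<Sum>l<n+2. L_mat n t s $$ (i,l) * L_inv_mat n t s $$ (l,j))"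
    using i j by (simp add: scalar_prod_def atLeast0LessThan)
  also have "\<dots> = 1\<^sub>m (n+2) $$ (i,j)"
    unfolding L_inv_mat_col_sum[OF j] row_L using i j by (auto simp: L_mat_def)
  finally show "(L_mat n t s * L_inv_mat n t s) $$ (i,j) = 1\<^sub>m (n+2) $$ (i,j)" .
qed auto

lemma right_inverse_L_mat:
  assumes "L_mat n t s * M = 1\<^sub>m (n+2)" and M: "M \<in> carrier_mat (n+2) (n+2)"
  shows "M = L_inv_mat n t s"
proof -
  have "L_inv_mat n t s * L_mat n t s = 1\<^sub>m (n+2)"
    using mat_mult_left_right_inverse[OF L_mat_carrier L_inv_mat_carrier L_mat_mult_L_inv_mat] .
  then have "M = (L_inv_mat n t s * L_mat n t s) * M" using M by simp
  also have "\<dots> = L_inv_mat n t s * (L_mat n t s * M)"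
    using assoc_mult_mat[OF L_inv_mat_carrier L_mat_carrier M] .
  finally show ?thesis using assms by simp
qed

definition block_upper_triangular :: "nat \<Rightarrow> 'a::zero mat \<Rightarrow> bool" where
  "block_upper_triangular n X \<longleftrightarrow>
     (\<forall>k. 1 \<le> k \<and> k \<le> n+1 \<longrightarrow> X $$ (k,0) = 0) \<and> (\<forall>l\<le>n. X $$ (n+1,l) = 0)"

lemma index_L_mat_conj:
  assumes X: "X \<in> carrier_mat (n+2) (n+2)" "block_upper_triangular n X"
    and ij: "i \<le> n+1" "j \<le> n+1" "\<not> (i = 0 \<and> j = n+1)"
  shows "(L_mat n t s * X * L_inv_mat n t s) $$ (i,j) =
    (if j = 0 then (if i = 0 then X $$ (0,0) else 0)
     else if i = n+1 then (if j = n+1 then X $$ (n+1,n+1) else 0)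
     else if i = 0 then X $$ (0,j) + (\<Sum>k<n. t k * X $$ (k+1,j)) - t (j-1) * X $$ (0,0)
     else if j = n+1 then X $$ (i,n+1) + s (i-1) * X $$ (n+1,n+1) - (\<Sum>l<n. s l * X $$ (i,l+1))
     else X $$ (i,j))" (is "_ = ?rhs")
proof -
  have col0: "X $$ (k,0) = 0" if "1 \<le> k" "k \<le> n+1" for k
    using X(2) that unfolding block_upper_triangular_def by blast
  have row_last: "X $$ (n+1,l) = 0" if "l \<le> n" for l
    using X(2) that unfolding block_upper_triangular_def by blast
  have i: "i < n+2" and j: "j < n+2" using ij by auto
  have "(L_mat n t s * X * L_inv_mat n t s) $$ (i,j)
      = (\<Sum>k<n+2. L_mat n t s $$ (i,k) * (\<Sum>l<n+2. X $$ (k,l) * L_inv_mat n t s $$ (l,j)))"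
    using ij by (simp only: index_mult_mult_mat[OF L_mat_carrier X(1) L_inv_mat_carrier]
        sum_distrib_left mult.assoc)
  also have "\<dots> = ?rhs"
    using ij col0 row_last unfolding L_inv_mat_col_sum[OF j] L_mat_row_sum[OF i]
    by (auto simp: algebra_simps sum_subtractf sum.distrib)
  finally show ?thesis .
qed

lemma block_upper_triangular_comp_mat:
  assumes W: "regular_form q \<chi> W" and O: "O' \<in> carrier_mat q q"
  shows "block_upper_triangular \<chi> (comp_mat q O' (\<chi>+2) W)"
proof -
  have "op_inner q O' (0\<^sub>m q q) = 0" using O by (simp add: op_inner_eq_sum[of _ q])
  then show ?thesis using W unfolding block_upper_triangular_def regular_form_def by auto
qed

lemma block_upper_triangular_entry_mat:
  assumes "regular_form q \<chi> W" "x < q" "y < q"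
  shows "block_upper_triangular \<chi> (entry_mat (\<chi>+2) W x y)"
  using assms unfolding block_upper_triangular_def regular_form_def entry_mat_def by auto

lemma L_mat_conj_block_diagonal:
  fixes X :: "complex mat"
  assumes X: "X \<in> carrier_mat (n+2) (n+2)" "block_upper_triangular n X"
    and corners: "X $$ (0,0) = 1" "X $$ (n+1,n+1) = 1"
    and ev: "\<not> eigenvalue (mat n n (\<lambda>(a,b). X $$ (a+1,b+1))) 1"
  shows "\<exists>t s. \<forall>i\<le>n+1. \<forall>j\<le>n+1. \<not> (i = 0 \<and> j = n+1) \<longrightarrow>
     (L_mat n t s * X * L_inv_mat n t s) $$ (i,j) =
       (if 1 \<le> i \<and> i \<le> n \<and> 1 \<le> j \<and> j \<le> n then X $$ (i,j) else if i = j then 1 else 0)"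
proof -
  define A where "A = mat n n (\<lambda>(a,b). X $$ (a+1,b+1))"
  have A: "A \<in> carrier_mat n n" unfolding A_def by simp
  have ev_T: "\<not> eigenvalue (transpose_mat A) 1"
    using ev A unfolding A_def[symmetric] by (simp add: eigenvalue_transpose_mat)
  obtain t where t: "\<forall>b<n. t b - (\<Sum>k<n. transpose_mat A $$ (b,k) * t k) = X $$ (0,b+1)"
    using solvable_if_not_eigenvalue_one[OF transpose_carrier_mat[THEN iffD2, OF A] ev_T,
        where c = "\<lambda>b. X $$ (0,b+1)"] by blast
  obtain s where s: "\<forall>a<n. s a - (\<Sum>l<n. A $$ (a,l) * s l) = - X $$ (a+1,n+1)"
    using solvable_if_not_eigenvalue_one[OF A ev[folded A_def], where c = "\<lambda>a. - X $$ (a+1,n+1)"]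
    by blast
  have top_zero: "X $$ (0,j) + (\<Sum>k<n. t k * X $$ (k+1,j)) - t (j-1) * X $$ (0,0) = 0"
    if "1 \<le> j" "j \<le> n" for j
  proof -
    have "(\<Sum>k<n. t k * X $$ (k+1,j)) = (\<Sum>k<n. transpose_mat A $$ (j-1,k) * t k)"
      using that A by (intro sum.cong) (auto simp: A_def)
    moreover have "j - 1 < n" using that by linarith
    ultimately show ?thesis using t[rule_format, of "j-1"] that corners by (simp add: algebra_simps)
  qed
  have right_zero: "X $$ (i,n+1) + s (i-1) * X $$ (n+1,n+1) - (\<Sum>l<n. s l * X $$ (i,l+1)) = 0"
    if "1 \<le> i" "i \<le> n" for i
  proof -
    have "(\<Sum>l<n. s l * X $$ (i,l+1)) = (\<Sum>l<n. A $$ (i-1,l) * s l)"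
      using that by (intro sum.cong) (auto simp: A_def)
    moreover have "i - 1 < n" using that by linarith
    ultimately show ?thesis using s[rule_format, of "i-1"] that corners by (simp add: algebra_simps)
  qed
  show ?thesis
    by (rule exI[where x = t], rule exI[where x = s])
      (use index_L_mat_conj[OF X] top_zero right_zero corners in auto)
qed

lemma mid_block_sandwich_L_mat:
  assumes W: "regular_form q \<chi> W" and ab: "a < \<chi>" "b < \<chi>"
  shows "mid_block \<chi> (sandwich q (\<chi>+2) (L_mat \<chi> t s) W (L_inv_mat \<chi> t s)) a b = mid_block \<chi> W a b"
proof -
  have W_ab: "W (a+1) (b+1) \<in> carrier_mat q q" using W ab unfolding regular_form_def by auto
  show ?thesis unfolding mid_block_def
  proof (rule eq_matI)
    fix x y assume "x < dim_row (W (a+1) (b+1))" "y < dim_col (W (a+1) (b+1))"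
    then have xy: "x < q" "y < q" using W_ab by auto
    have "sandwich q (\<chi>+2) (L_mat \<chi> t s) W (L_inv_mat \<chi> t s) (a+1) (b+1) $$ (x,y)
        = (L_mat \<chi> t s * entry_mat (\<chi>+2) W x y * L_inv_mat \<chi> t s) $$ (a+1,b+1)"
      using ab xy by (intro index_sandwich) auto
    also have "\<dots> = W (a+1) (b+1) $$ (x,y)"
      using ab xy block_upper_triangular_entry_mat[OF W xy]
      by (subst index_L_mat_conj) (auto simp: entry_mat_def)
    finally show "sandwich q (\<chi>+2) (L_mat \<chi> t s) W (L_inv_mat \<chi> t s) (a+1) (b+1) $$ (x,y)
        = W (a+1) (b+1) $$ (x,y)" .
  qed (use W_ab in \<open>auto simp: sandwich_def\<close>)
qed

theorem lemma4:
  fixes q \<chi> :: nat and Ob :: "nat \<Rightarrow> complex mat" and W :: "nat \<Rightarrow> nat \<Rightarrow> complex mat"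
  assumes "q \<ge> 1"
    and "ortho_basis q Ob"
    and "regular_form q \<chi> W"
    and "first_degree q Ob \<chi> W"
  shows "\<exists>t s :: nat \<Rightarrow> complex. \<forall>Linv. L_mat \<chi> t s * Linv = 1\<^sub>m (\<chi>+2) \<and> Linv \<in> carrier_mat (\<chi>+2) (\<chi>+2) \<longrightarrow>
     (let W' = sandwich q (\<chi>+2) (L_mat \<chi> t s) W Linv;
          W0' = comp_mat q (1\<^sub>m q) (\<chi>+2) W'
      in (\<forall>i\<le>\<chi>+1. \<forall>j\<le>\<chi>+1. \<not> (i = 0 \<and> j = \<chi>+1) \<longrightarrow>
            W0' $$ (i,j) =
              (if 1 \<le> i \<and> i \<le> \<chi> \<and> 1 \<le> j \<and> j \<le> \<chi>
               then op_inner q (1\<^sub>m q) (W i j)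
               else if i = j then 1 else 0))
       \<and> (\<forall>a<\<chi>. \<forall>b<\<chi>. mid_block \<chi> W' a b = mid_block \<chi> W a b))"
proof -
  define W0 where "W0 = comp_mat q (1\<^sub>m q) (\<chi>+2) W"
  have "W0 $$ (0,0) = 1" "W0 $$ (\<chi>+1,\<chi>+1) = 1"
    using assms(1,3) by (simp_all add: W0_def regular_form_def op_inner_one)
  moreover have "mat \<chi> \<chi> (\<lambda>(a,b). W0 $$ (a+1,b+1)) = comp_mat q (Ob 0) \<chi> (mid_block \<chi> W)"
    using assms(2) by (auto simp: W0_def ortho_basis_def mid_block_def comp_mat_def)
  moreover have "block_upper_triangular \<chi> W0"
    unfolding W0_def using assms(3) by (intro block_upper_triangular_comp_mat one_carrier_mat)
  ultimately obtain t s where ts: "\<forall>i\<le>\<chi>+1. \<forall>j\<le>\<chi>+1. \<not> (i = 0 \<and> j = \<chi>+1) \<longrightarrow>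
      (L_mat \<chi> t s * W0 * L_inv_mat \<chi> t s) $$ (i,j) =
        (if 1 \<le> i \<and> i \<le> \<chi> \<and> 1 \<le> j \<and> j \<le> \<chi> then W0 $$ (i,j) else if i = j then 1 else 0)"
    using L_mat_conj_block_diagonal[of W0 \<chi>] first_degree_not_eigenvalue_one[OF _ assms(4)] assms(1)
    by (auto simp: W0_def)
  have W0': "comp_mat q (1\<^sub>m q) (\<chi>+2) (sandwich q (\<chi>+2) (L_mat \<chi> t s) W (L_inv_mat \<chi> t s))
      = L_mat \<chi> t s * W0 * L_inv_mat \<chi> t s"
    unfolding W0_def using assms(3) unfolding regular_form_def by (intro comp_mat_sandwich) auto
  have W0_index: "W0 $$ (i,j) = op_inner q (1\<^sub>m q) (W i j)" if "i \<le> \<chi>+1" "j \<le> \<chi>+1" for i j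
    using that by (simp add: W0_def)
  show ?thesis
  proof (rule exI[where x = t], rule exI[where x = s], intro allI impI)
    fix Linv assume "L_mat \<chi> t s * Linv = 1\<^sub>m (\<chi>+2) \<and> Linv \<in> carrier_mat (\<chi>+2) (\<chi>+2)"
    then have Linv: "Linv = L_inv_mat \<chi> t s" using right_inverse_L_mat by blast
    show "let W' = sandwich q (\<chi>+2) (L_mat \<chi> t s) W Linv; W0' = comp_mat q (1\<^sub>m q) (\<chi>+2) W'
      in (\<forall>i\<le>\<chi>+1. \<forall>j\<le>\<chi>+1. \<not> (i = 0 \<and> j = \<chi>+1) \<longrightarrow>
            W0' $$ (i,j) =
              (if 1 \<le> i \<and> i \<le> \<chi> \<and> 1 \<le> j \<and> j \<le> \<chi>
               then op_inner q (1\<^sub>m q) (W i j)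
               else if i = j then 1 else 0))
       \<and> (\<forall>a<\<chi>. \<forall>b<\<chi>. mid_block \<chi> W' a b = mid_block \<chi> W a b)"
      unfolding Let_def Linv W0' using ts W0_index mid_block_sandwich_L_mat[OF assms(3)] by simp
  qed
qed

end
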